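(* Let $M,N$ be relatively prime positive integers. Then every unit norm tight frame $\Phi=\{\varphi_n\}_{n=1}^N\subseteq\mathbb{R}^M$ yields almost injective intensity measurements, i.e., the map $\mathcal{A}\colon\mathbb{R}^M/\{\pm1\}\to\mathbb{R}^N$, $(\mathcal{A}(x))(n):=|\langle x,\varphi_n\rangle|^2$, satisfies $\mathcal{A}^{-1}(\mathcal{A}(x))=\{\pm x\}$ for almost every $x\in\mathbb{R}^M$.
   Context: A unit norm tight frame is a collection $\{\varphi_n\}_{n=1}^N\subseteq\mathbb{R}^M$ with $\|\varphi_n\|=1$ for all $n$ and a constant $A>0$ such that $\sum_{n=1}^N|\langle x,\varphi_n\rangle|^2=A\|x\|^2$ for all $x\in\mathbb{R}^M$ (equivalently $\Phi\Phi^*=\frac{N}{M}I$ where $\Phi$ is the matrix with columns $\varphi_n$). *)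

theory Defs
  imports "HOL-Analysis.Analysis"
begin

definition unit_norm_tight_frame :: "nat \<Rightarrow> (nat \<Rightarrow> real ^ 'm) \<Rightarrow> bool" where
  "unit_norm_tight_frame N \<phi> \<longleftrightarrow>
     (\<forall>n<N. norm (\<phi> n) = 1) \<and>
     (\<exists>A>0. \<forall>x::real ^ 'm. (\<Sum>n<N. \<bar>x \<bullet> \<phi> n\<bar>^2) = A * (norm x)^2)"

definition intensity :: "nat \<Rightarrow> (nat \<Rightarrow> real ^ 'm) \<Rightarrow> real ^ 'm \<Rightarrow> (nat \<Rightarrow> real)" where
  "intensity N \<phi> x = (\<lambda>n. if n < N then \<bar>x \<bullet> \<phi> n\<bar>^2 else 0)"

end

theory Submission
  imports Defs
begin

text \<open>
  Suppose \<open>\<bar>\<langle>x,\<phi>\<^sub>n\<rangle>\<bar> = \<bar>\<langle>y,\<phi>\<^sub>n\<rangle>\<bar>\<close> for all \<open>n\<close> with \<open>y \<noteq> \<pm>x\<close>. Then each \<open>\<phi>\<^sub>n\<close> is orthogonal to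
  \<open>x + y\<close> or to \<open>x - y\<close>, giving a partition of the frame into \<open>S\<close> and its complement with
  \<open>x \<in> \<phi>\<^sub>S\<^sup>\<bottom> + \<phi>\<^bsub>S\<^sup>c\<^esub>\<^sup>\<bottom>\<close>. If this sum were the whole space, the spans of \<open>\<phi>\<^sub>S\<close> and \<open>\<phi>\<^bsub>S\<^sup>c\<^esub>\<close>
  would meet only in 0; by the reconstruction formula \<open>\<Sum>\<^sub>n \<langle>w,\<phi>\<^sub>n\<rangle>\<phi>\<^sub>n = A w\<close> they are then
  orthogonal, and tracing the frame operator over \<open>W = span \<phi>\<^sub>S\<close> gives \<open>|S| = A dim W\<close>,
  while \<open>N = A M\<close>. So \<open>M\<close> divides \<open>N dim W\<close>, hence \<open>dim W \<in> {0, M}\<close> by coprimality, forcing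
  \<open>S = \<emptyset>\<close> or \<open>S\<close> to be everything, i.e. \<open>y = \<pm>x\<close>. Hence the ambiguous \<open>x\<close> lie in
  finitely many proper subspaces, a null set.
\<close>

lemma tight_frame_inner_sum:
  fixes \<phi> :: "nat \<Rightarrow> 'a::real_inner"
  assumes tight: "\<And>x. (\<Sum>n<N. (x \<bullet> \<phi> n)\<^sup>2) = A * (norm x)\<^sup>2"
  shows "(\<Sum>n<N. (w \<bullet> \<phi> n) * (z \<bullet> \<phi> n)) = A * (w \<bullet> z)"
proof -
  have "4 * (\<Sum>n<N. (w \<bullet> \<phi> n) * (z \<bullet> \<phi> n))
      = (\<Sum>n<N. ((w + z) \<bullet> \<phi> n)\<^sup>2) - (\<Sum>n<N. ((w - z) \<bullet> \<phi> n)\<^sup>2)"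
    by (simp add: sum_distrib_left sum_subtractf[symmetric] power2_eq_square algebra_simps)
  also have "\<dots> = A * ((w + z) \<bullet> (w + z)) - A * ((w - z) \<bullet> (w - z))"
    by (simp add: tight power2_norm_eq_inner)
  also have "\<dots> = 4 * (A * (w \<bullet> z))"
    by (simp add: inner_commute algebra_simps)
  finally show ?thesis by simp
qed

lemma tight_frame_reconstruction:
  fixes \<phi> :: "nat \<Rightarrow> 'a::real_inner"
  assumes tight: "\<And>x. (\<Sum>n<N. (x \<bullet> \<phi> n)\<^sup>2) = A * (norm x)\<^sup>2"
  shows "(\<Sum>n<N. (w \<bullet> \<phi> n) *\<^sub>R \<phi> n) = A *\<^sub>R w"
proof (rule vector_eq_rdot[THEN iffD1], rule allI)
  fix z
  have "(\<Sum>n<N. (w \<bullet> \<phi> n) *\<^sub>R \<phi> n) \<bullet> z = (\<Sum>n<N. (w \<bullet> \<phi> n) * (z \<bullet> \<phi> n))"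
    by (simp add: inner_sum_left inner_commute[of "\<phi> _" z])
  then show "(\<Sum>n<N. (w \<bullet> \<phi> n) *\<^sub>R \<phi> n) \<bullet> z = (A *\<^sub>R w) \<bullet> z"
    by (simp add: tight_frame_inner_sum[OF tight])
qed

lemma tight_frame_orthogonal_all_imp_zero:
  fixes \<phi> :: "nat \<Rightarrow> 'a::real_inner"
  assumes tight: "\<And>x. (\<Sum>n<N. (x \<bullet> \<phi> n)\<^sup>2) = A * (norm x)\<^sup>2" and "A > 0"
    and "\<And>n. n < N \<Longrightarrow> w \<bullet> \<phi> n = 0"
  shows "w = 0"
  using tight[of w] assms(2,3) by simp

text \<open>The trace of the frame operator restricted to \<open>span \<phi>\<^sub>S\<close>, computed in two ways.\<close>

lemma tight_frame_card_eq_dim: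
  fixes \<phi> :: "nat \<Rightarrow> 'a::euclidean_space"
  assumes tight: "\<And>x. (\<Sum>n<N. (x \<bullet> \<phi> n)\<^sup>2) = A * (norm x)\<^sup>2"
    and unit: "\<And>n. n < N \<Longrightarrow> norm (\<phi> n) = 1"
    and S: "S \<subseteq> {..<N}"
    and orth: "\<And>w m. w \<in> span (\<phi> ` S) \<Longrightarrow> m < N \<Longrightarrow> m \<notin> S \<Longrightarrow> w \<bullet> \<phi> m = 0"
  shows "real (card S) = A * real (dim (span (\<phi> ` S)))"
proof -
  obtain B where B: "B \<subseteq> span (\<phi> ` S)" "pairwise orthogonal B" "\<And>b. b \<in> B \<Longrightarrow> norm b = 1"
    "independent B" "card B = dim (span (\<phi> ` S))" "span B = span (\<phi> ` S)"
    using orthonormal_basis_subspace[of "span (\<phi> ` S)"] by (metis subspace_span)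
  have fB: "finite B" using B(4) independent_imp_finite by blast
  have parseval: "(norm (\<phi> n))\<^sup>2 = (\<Sum>b\<in>B. (b \<bullet> \<phi> n)\<^sup>2)" if "n \<in> S" for n
  proof -
    have "\<phi> n \<in> span B" using B(6) that by (simp add: span_base)
    then have "\<phi> n \<bullet> \<phi> n = \<phi> n \<bullet> (\<Sum>b\<in>B. (\<phi> n \<bullet> b) *\<^sub>R b)"
      using orthonormal_basis_expand[OF B(2,3) _ fB] by simp
    then show ?thesis
      by (simp add: dot_square_norm inner_sum_right inner_commute power2_eq_square)
  qed
  have "real (card S) = (\<Sum>n\<in>S. (norm (\<phi> n))\<^sup>2)"
    using unit S by (simp add: subset_iff)
  also have "\<dots> = (\<Sum>b\<in>B. \<Sum>n\<in>S. (b \<bullet> \<phi> n)\<^sup>2)"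
    by (simp add: parseval sum.swap[of _ B])
  also have "\<dots> = (\<Sum>b\<in>B. \<Sum>n<N. (b \<bullet> \<phi> n)\<^sup>2)"
    by (intro sum.cong refl sum.mono_neutral_left) (use S orth B(1) in auto)
  also have "\<dots> = A * real (card B)"
    by (simp add: tight B(3))
  finally show ?thesis by (simp add: B(5))
qed

lemma tight_frame_count_eq_bound_times_DIM:
  fixes \<phi> :: "nat \<Rightarrow> 'a::euclidean_space"
  assumes tight: "\<And>x. (\<Sum>n<N. (x \<bullet> \<phi> n)\<^sup>2) = A * (norm x)\<^sup>2" and "A > 0"
    and unit: "\<And>n. n < N \<Longrightarrow> norm (\<phi> n) = 1"
  shows "real N = A * real DIM('a)"
proof -
  have "A *\<^sub>R w \<in> span (\<phi> ` {..<N})" for w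
    unfolding tight_frame_reconstruction[OF tight, symmetric]
    by (intro span_sum span_scale span_base) auto
  then have "w \<in> span (\<phi> ` {..<N})" for w
    using span_scale[of "A *\<^sub>R w" _ "inverse A"] \<open>A > 0\<close> by simp
  then have "span (\<phi> ` {..<N}) = UNIV" by auto
  then show ?thesis
    using tight_frame_card_eq_dim[OF tight unit, of "{..<N}"] by simp
qed

lemma span_inter_eq_zero_if_orthogonal_complements_cover:
  fixes X Y :: "'a::real_inner set"
  assumes cover: "\<And>w. \<exists>a b. w = a + b \<and> (\<forall>x\<in>X. a \<bullet> x = 0) \<and> (\<forall>y\<in>Y. b \<bullet> y = 0)"
    and "w \<in> span X" "w \<in> span Y"
  shows "w = 0"
proof -
  obtain a b where ab: "w = a + b" "\<forall>x\<in>X. a \<bullet> x = 0" "\<forall>y\<in>Y. b \<bullet> y = 0"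
    using cover by blast
  have "orthogonal a w" "orthogonal b w"
    using orthogonal_to_span[of w X a] orthogonal_to_span[of w Y b] assms(2,3) ab(2,3)
    by (auto simp: orthogonal_def)
  then have "w \<bullet> w = 0"
    using ab(1) by (simp add: orthogonal_def inner_add_left inner_commute)
  then show ?thesis by simp
qed

lemma tight_frame_split_orthogonal:
  fixes \<phi> :: "nat \<Rightarrow> 'a::real_inner"
  assumes tight: "\<And>x. (\<Sum>n<N. (x \<bullet> \<phi> n)\<^sup>2) = A * (norm x)\<^sup>2"
    and S: "S \<subseteq> {..<N}"
    and disjoint: "\<And>w. w \<in> span (\<phi> ` S) \<Longrightarrow> w \<in> span (\<phi> ` ({..<N} - S)) \<Longrightarrow> w = 0"
    and w: "w \<in> span (\<phi> ` S)" and m: "m < N" "m \<notin> S"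
  shows "w \<bullet> \<phi> m = 0"
proof -
  define T where "T = (\<Sum>n\<in>{..<N} - S. (w \<bullet> \<phi> n) *\<^sub>R \<phi> n)"
  have "T = A *\<^sub>R w - (\<Sum>n\<in>S. (w \<bullet> \<phi> n) *\<^sub>R \<phi> n)"
    using sum.subset_diff[OF S finite_lessThan, of "\<lambda>n. (w \<bullet> \<phi> n) *\<^sub>R \<phi> n"]
    by (simp add: T_def tight_frame_reconstruction[OF tight])
  then have "T \<in> span (\<phi> ` S)"
    using w by (simp add: span_diff span_scale span_sum span_base)
  moreover have "T \<in> span (\<phi> ` ({..<N} - S))"
    unfolding T_def by (intro span_sum span_scale span_base) auto
  ultimately have "w \<bullet> T = 0" using disjoint inner_zero_right by metis
  then have "(\<Sum>n\<in>{..<N} - S. (w \<bullet> \<phi> n)\<^sup>2) = 0"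
    by (simp add: T_def inner_sum_right power2_eq_square)
  then show ?thesis
    using m by (subst (asm) sum_nonneg_eq_0_iff) auto
qed

lemma coprime_tight_frame_no_split:
  fixes \<phi> :: "nat \<Rightarrow> 'a::euclidean_space"
  assumes tight: "\<And>x. (\<Sum>n<N. (x \<bullet> \<phi> n)\<^sup>2) = A * (norm x)\<^sup>2" and "A > 0"
    and unit: "\<And>n. n < N \<Longrightarrow> norm (\<phi> n) = 1"
    and coprime: "coprime DIM('a) N"
    and S: "S \<subseteq> {..<N}"
    and disjoint: "\<And>w. w \<in> span (\<phi> ` S) \<Longrightarrow> w \<in> span (\<phi> ` ({..<N} - S)) \<Longrightarrow> w = 0"
  shows "S = {} \<or> S = {..<N}"
proof -
  define d where "d = dim (span (\<phi> ` S))"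
  have "real (card S) = A * real d"
    unfolding d_def
    by (rule tight_frame_card_eq_dim[OF tight unit S tight_frame_split_orthogonal[OF tight S disjoint]])
  with tight_frame_count_eq_bound_times_DIM[OF tight \<open>A > 0\<close> unit]
  have "real (card S) * real DIM('a) = real N * real d"
    by simp
  then have "card S * DIM('a) = N * d"
    by (metis of_nat_eq_iff of_nat_mult)
  then have "DIM('a) dvd d"
    using coprime by (metis coprime_dvd_mult_right_iff dvd_triv_right)
  moreover have "d \<le> DIM('a)"
    unfolding d_def by (rule dim_subset_UNIV)
  ultimately have "d = 0 \<or> d = DIM('a)"
    using nat_dvd_not_less by fastforce
  then have "card S * DIM('a) = 0 \<or> card S * DIM('a) = N * DIM('a)"
    using \<open>card S * DIM('a) = N * d\<close> by auto
  then have "card S = 0 \<or> card S = card {..<N}"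
    by simp
  moreover have "finite S" using S finite_subset by blast
  ultimately show ?thesis
    by (metis S card_0_eq card_subset_eq finite_lessThan)
qed

definition split_complement_sum :: "nat \<Rightarrow> (nat \<Rightarrow> 'a::real_inner) \<Rightarrow> nat set \<Rightarrow> 'a set" where
  "split_complement_sum N \<phi> S =
     {a + b |a b. (\<forall>n\<in>S. a \<bullet> \<phi> n = 0) \<and> (\<forall>n\<in>{..<N} - S. b \<bullet> \<phi> n = 0)}"

lemma subspace_split_complement_sum: "subspace (split_complement_sum N \<phi> S)"
proof -
  have complement: "subspace {a. \<forall>n\<in>T. a \<bullet> \<phi> n = 0}" for T
    by (auto simp: subspace_def inner_add_left)
  show ?thesis
    using subspace_sums[OF complement complement] unfolding split_complement_sum_def by simp
qed

lemma negligible_proper_subspace: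
  fixes T :: "'a::euclidean_space set"
  assumes "subspace T" "T \<noteq> UNIV"
  shows "negligible T"
proof (rule negligible_lowdim)
  have "dim T \<noteq> DIM('a)"
    using assms dim_eq_full span_eq_iff by metis
  then show "dim T < DIM('a)"
    using dim_subset_UNIV[of T] by simp
qed

lemma coprime_tight_frame_split_complement_sum_proper:
  fixes \<phi> :: "nat \<Rightarrow> 'a::euclidean_space"
  assumes tight: "\<And>x. (\<Sum>n<N. (x \<bullet> \<phi> n)\<^sup>2) = A * (norm x)\<^sup>2" and "A > 0"
    and unit: "\<And>n. n < N \<Longrightarrow> norm (\<phi> n) = 1"
    and coprime: "coprime DIM('a) N"
    and S: "S \<subseteq> {..<N}" "S \<noteq> {}" "S \<noteq> {..<N}"
  shows "split_complement_sum N \<phi> S \<noteq> UNIV"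
proof
  assume "split_complement_sum N \<phi> S = UNIV"
  then have "w = 0" if "w \<in> span (\<phi> ` S)" "w \<in> span (\<phi> ` ({..<N} - S))" for w
    using that
    by (intro span_inter_eq_zero_if_orthogonal_complements_cover[of "\<phi> ` S" "\<phi> ` ({..<N} - S)"])
       (auto simp: split_complement_sum_def set_eq_iff)
  then show False
    using coprime_tight_frame_no_split[OF tight \<open>A > 0\<close> unit coprime S(1)] S(2,3) by blast
qed

lemma intensity_collision_mem_split_complement_sum:
  fixes \<phi> :: "nat \<Rightarrow> real ^ 'm"
  assumes tight: "\<And>x::real^'m. (\<Sum>n<N. (x \<bullet> \<phi> n)\<^sup>2) = A * (norm x)\<^sup>2" and "A > 0"
    and collision: "intensity N \<phi> y = intensity N \<phi> x" and "y \<noteq> x" "y \<noteq> -x"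
  obtains S where "S \<subseteq> {..<N}" "S \<noteq> {}" "S \<noteq> {..<N}" "x \<in> split_complement_sum N \<phi> S"
proof
  define S where "S = {n. n < N \<and> (x + y) \<bullet> \<phi> n = 0}"
  have factor: "(x + y) \<bullet> \<phi> n = 0 \<or> (x - y) \<bullet> \<phi> n = 0" if "n < N" for n
  proof -
    have "(y \<bullet> \<phi> n)\<^sup>2 = (x \<bullet> \<phi> n)\<^sup>2"
      using fun_cong[OF collision, of n] that by (simp add: intensity_def)
    then show ?thesis
      by (auto simp: power2_eq_iff inner_add_left inner_diff_left)
  qed
  show "S \<subseteq> {..<N}" by (auto simp: S_def)
  show "S \<noteq> {}"
  proof
    assume "S = {}"
    then have "x - y = 0"
      using factor by (intro tight_frame_orthogonal_all_imp_zero[OF tight \<open>A > 0\<close>]) (auto simp: S_def)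
    with \<open>y \<noteq> x\<close> show False by simp
  qed
  show "S \<noteq> {..<N}"
  proof
    assume "S = {..<N}"
    then have "x + y = 0"
      by (intro tight_frame_orthogonal_all_imp_zero[OF tight \<open>A > 0\<close>]) (auto simp: S_def set_eq_iff)
    with \<open>y \<noteq> -x\<close> show False by (simp add: add_eq_0_iff2)
  qed
  show "x \<in> split_complement_sum N \<phi> S"
    unfolding split_complement_sum_def
  proof (intro CollectI exI conjI)
    show "x = (1/2) *\<^sub>R (x + y) + (1/2) *\<^sub>R (x - y)"
      by (simp add: scaleR_add_right[symmetric] scaleR_2[symmetric])
    show "\<forall>n\<in>S. ((1/2) *\<^sub>R (x + y)) \<bullet> \<phi> n = 0"
      by (simp add: S_def)
    show "\<forall>n\<in>{..<N} - S. ((1/2) *\<^sub>R (x - y)) \<bullet> \<phi> n = 0"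
      using factor by (auto simp: S_def)
  qed
qed

lemma intensity_ambiguity_mem_split_complement_sum:
  fixes \<phi> :: "nat \<Rightarrow> real ^ 'm"
  assumes tight: "\<And>x::real^'m. (\<Sum>n<N. (x \<bullet> \<phi> n)\<^sup>2) = A * (norm x)\<^sup>2" and "A > 0"
    and ambiguous: "{y. intensity N \<phi> y = intensity N \<phi> x} \<noteq> {x, -x}"
  obtains S where "S \<subseteq> {..<N}" "S \<noteq> {}" "S \<noteq> {..<N}" "x \<in> split_complement_sum N \<phi> S"
proof -
  have "intensity N \<phi> (-x) = intensity N \<phi> x"
    unfolding intensity_def inner_minus_left abs_minus_cancel ..
  then obtain y where "intensity N \<phi> y = intensity N \<phi> x" "y \<noteq> x" "y \<noteq> -x"
    using ambiguous by auto
  then show thesis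
    using that intensity_collision_mem_split_complement_sum[OF tight \<open>A > 0\<close>] by blast
qed

theorem theorem13:
  fixes \<phi> :: "nat \<Rightarrow> real ^ 'm" and N :: nat
  assumes "N > 0"
    and "coprime CARD('m) N"
    and "unit_norm_tight_frame N \<phi>"
  shows "AE x in lebesgue. {y. intensity N \<phi> y = intensity N \<phi> x} = {x, -x}"
proof -
  obtain A where "A > 0" and tight: "\<And>x::real^'m. (\<Sum>n<N. (x \<bullet> \<phi> n)\<^sup>2) = A * (norm x)\<^sup>2"
    and unit: "\<And>n. n < N \<Longrightarrow> norm (\<phi> n) = 1"
    using assms(3) unfolding unit_norm_tight_frame_def by auto
  define F where "F = split_complement_sum N \<phi> ` {S. S \<subseteq> {..<N} \<and> S \<noteq> {} \<and> S \<noteq> {..<N}}"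
  have "negligible (\<Union>F)"
  proof (rule negligible_Union)
    show "finite F" unfolding F_def by auto
    show "negligible T" if "T \<in> F" for T
      using that coprime_tight_frame_split_complement_sum_proper[OF tight \<open>A > 0\<close> unit] assms(2)
      by (auto simp: F_def intro!: negligible_proper_subspace subspace_split_complement_sum)
  qed
  moreover have "x \<in> \<Union>F" if "{y. intensity N \<phi> y = intensity N \<phi> x} \<noteq> {x, -x}" for x
    by (rule intensity_ambiguity_mem_split_complement_sum[OF tight \<open>A > 0\<close> that]) (auto simp: F_def)
  ultimately show ?thesis
    by (intro AE_I'[of "\<Union>F"]) (auto simp: negligible_iff_null_sets)
qed

end
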